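(* Let $E$ be an unstable torsion free sheaf of rank $r$ on a smooth complex projective variety $X$ of dimension $n$, let $m$ be sufficiently large, $V=H^0(E(m))$, and let $0\subsetneq V_1\subsetneq\cdots\subsetneq V_{t+1}=V$ be the Kempf filtration of $V$. Set $V^i=V_i/V_{i-1}$, $r^i=r_i-r_{i-1}$ and $$v_i=m^{n+1}\frac{r^i\dim V-r\dim V^i}{\dim V^i\dim V}.$$ Then $v_1<v_2<\cdots<v_{t+1}$ (i.e. the associated graph with vertices $(\dim V_i/m^n,\ \frac{m}{\dim V}(r\dim V_i-r_i\dim V))$ is convex).
   Context: Here $r_i$ is the rank of the subsheaf $E_{V_i}\subset E$ generated by $V_i$ under evaluation ($r_0=0$, $V_0=0$). "Sufficiently large" means $E(m)$ globally generated with $h^0(E(m))=P_E(m)$ and $m$ beyond the integer from which $E$ unstable implies the corresponding GIT point is unstable. With $p=\dim V$: a weighted filtration of $V$ is $0\subsetneq V_1\subsetneq\cdots\subsetneq V_{t+1}=V$ with rationals $n_i>0$; $\Gamma_1<\dots<\Gamma_{t+1}$ are determined by $\Gamma_{i+1}-\Gamma_i=pn_i$, $\sum\Gamma_i\dim V^i=0$. The Kempf function $\mu(V_\bullet,n_\bullet)=\sum_{i=1}^tn_i(r\dim V_i-r_i\dim V)/\sqrt{\sum_i\dim V^i\,\Gamma_i^2}$ has (Kempf's theorem) a unique maximizing weighted filtration up to common rescaling of the weights; its underlying filtration is the Kempf filtration of $V$. *)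

theory Defs
  imports "HOL-Analysis.Analysis"
begin

text \<open>The vector space V = H^0(E(m)) is modelled as the complex vector space
  complex^'k (finite dimensional; p = CARD('k) = dim V).
  The rank function rk assigns to a subspace W of V the rank of the subsheaf E_W of E
  generated by W.\<close>

type_synonym 'k cvec = "complex ^ 'k"

definition cdim :: "'k::finite cvec set \<Rightarrow> nat" where
  "cdim W = vec.dim W"

definition is_filtration :: "nat \<Rightarrow> (nat \<Rightarrow> 'k::finite cvec set) \<Rightarrow> bool" where
  "is_filtration t Vf \<longleftrightarrow>
     Vf 0 = {0} \<and> Vf (Suc t) = UNIV \<and>
     (\<forall>i \<le> Suc t. vec.subspace (Vf i)) \<and>
     (\<forall>i \<le> t. Vf i \<subset> Vf (Suc i))"

definition is_weighted_filtration ::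
    "nat \<Rightarrow> (nat \<Rightarrow> 'k::finite cvec set) \<Rightarrow> (nat \<Rightarrow> rat) \<Rightarrow> bool" where
  "is_weighted_filtration t Vf nw \<longleftrightarrow>
     is_filtration t Vf \<and> (\<forall>i\<in>{1..t}. nw i > 0)"

definition gdim :: "(nat \<Rightarrow> 'k::finite cvec set) \<Rightarrow> nat \<Rightarrow> nat" where
  "gdim Vf i = cdim (Vf i) - cdim (Vf (i - 1))"

text \<open>Gamma_1 < ... < Gamma_(t+1), determined by Gamma_(i+1) - Gamma_i = p n_i and
  sum_i dim V^i Gamma_i = 0, where p = dim V.\<close>
definition Gam :: "nat \<Rightarrow> (nat \<Rightarrow> 'k::finite cvec set) \<Rightarrow> (nat \<Rightarrow> rat) \<Rightarrow> nat \<Rightarrow> real" where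
  "Gam t Vf nw i =
     (let p = real CARD('k);
          S = (\<lambda>j. p * (\<Sum>l\<in>{1..<j}. real_of_rat (nw l)))
      in S i - (\<Sum>k\<in>{1..Suc t}. real (gdim Vf k) * S k) / p)"

definition kempf_mu ::
    "nat \<Rightarrow> ('k::finite cvec set \<Rightarrow> nat) \<Rightarrow> nat \<Rightarrow> (nat \<Rightarrow> 'k cvec set) \<Rightarrow> (nat \<Rightarrow> rat) \<Rightarrow> real" where
  "kempf_mu r rk t Vf nw =
     (\<Sum>i\<in>{1..t}. real_of_rat (nw i) *
        (real r * real (cdim (Vf i)) - real (rk (Vf i)) * real CARD('k)))
     / sqrt (\<Sum>i\<in>{1..Suc t}. real (gdim Vf i) * (Gam t Vf nw i)^2)"

text \<open>The Kempf filtration: the underlying filtration of a weighted filtration maximizing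
  the Kempf function (by Kempf's theorem this maximizer is unique up to rescaling).\<close>
definition is_kempf_filtration ::
    "nat \<Rightarrow> ('k::finite cvec set \<Rightarrow> nat) \<Rightarrow> nat \<Rightarrow> (nat \<Rightarrow> 'k cvec set) \<Rightarrow> bool" where
  "is_kempf_filtration r rk t Vf \<longleftrightarrow>
     (\<exists>nw. is_weighted_filtration t Vf nw \<and>
        (\<forall>t' (Vf' :: nat \<Rightarrow> 'k cvec set) nw'. is_weighted_filtration t' Vf' nw' \<longrightarrow>
            kempf_mu r rk t' Vf' nw' \<le> kempf_mu r rk t Vf nw))"

end

theory Submission
  imports Defs
begin

text \<open>By Abel summation the Kempf function of a weighted filtration equals
  (sum_k Gamma_k (r_k - r_(k-1))) / sqrt (sum_k dim V^k Gamma_k^2).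
  If v_i >= v_(i+1), delete V_i from the Kempf filtration and share the weight n_i between its
  neighbours so that Gamma_i and Gamma_(i+1) are replaced by their mean weighted by dim V^i and
  dim V^(i+1). By the slope inequality the numerator does not decrease, while the denominator
  drops by the (positive) weighted variance of the two merged values. Since the numerator is
  positive (E is unstable), the Kempf function strictly increases, contradicting maximality.\<close>

definition drop_step :: "nat \<Rightarrow> (nat \<Rightarrow> 'a) \<Rightarrow> nat \<Rightarrow> 'a" where
  "drop_step i X j = (if j < i then X j else X (Suc j))"

definition merge_at :: "nat \<Rightarrow> (nat \<Rightarrow> 'a) \<Rightarrow> 'a \<Rightarrow> nat \<Rightarrow> 'a" where
  "merge_at i f x k = (if k < i then f k else if k = i then x else f (Suc k))"

lemma merge_at_map2:
  "h (merge_at i f x k) (merge_at i g y k) = merge_at i (\<lambda>k. h (f k) (g k)) (h x y) k"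
  unfolding merge_at_def by simp

lemma sum_merge_at:
  fixes f :: "nat \<Rightarrow> 'a::ab_group_add"
  assumes "1 \<le> i" "i \<le> t"
  shows "(\<Sum>k\<in>{1..t}. merge_at i f x k) = (\<Sum>k\<in>{1..Suc t}. f k) - f i - f (Suc i) + x"
  using assms(2)
proof (induction t rule: dec_induct)
  case base
  have "(\<Sum>k\<in>{1..<i}. merge_at i f x k) = (\<Sum>k\<in>{1..<i}. f k)"
    by (intro sum.cong) (auto simp: merge_at_def)
  moreover have "{1..i} = insert i {1..<i}" "{1..Suc i} = insert (Suc i) (insert i {1..<i})"
    using assms(1) by auto
  ultimately show ?case by (simp add: merge_at_def)
next
  case (step t)
  then show ?case by (simp add: merge_at_def)
qed

lemma diff_drop_step:
  fixes D :: "nat \<Rightarrow> 'a::ab_group_add"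
  assumes "1 \<le> i"
  shows "drop_step i D k - drop_step i D (k - 1)
    = merge_at i (\<lambda>k. D k - D (k - 1)) ((D i - D (i - 1)) + (D (Suc i) - D i)) k"
proof -
  consider "k < i" | "k = i" | "i < k" by linarith
  then show ?thesis
    by cases (use assms in \<open>auto simp: drop_step_def merge_at_def\<close>)
qed

lemma sum_diff_mult_by_parts:
  fixes c a :: "nat \<Rightarrow> real"
  shows "(\<Sum>j\<in>{1..t}. (c (Suc j) - c j) * a j) =
     (\<Sum>k\<in>{1..Suc t}. c k * (a (k - 1) - a k)) - c 1 * a 0 + c (Suc t) * a (Suc t)"
  by (induction t) (simp_all add: algebra_simps)

lemma eq_if_diffs_eq_weighted_sums_eq:
  fixes c d g :: "nat \<Rightarrow> real"
  assumes diffs: "\<And>j. j \<in> {1..t} \<Longrightarrow> c (Suc j) - c j = d (Suc j) - d j"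
    and sums: "(\<Sum>k\<in>{1..Suc t}. g k * c k) = (\<Sum>k\<in>{1..Suc t}. g k * d k)"
    and total: "(\<Sum>k\<in>{1..Suc t}. g k) \<noteq> 0"
    and k: "k \<in> {1..Suc t}"
  shows "c k = d k"
proof -
  have offset: "c k - d k = c 1 - d 1" if "1 \<le> k" "k \<le> Suc t" for k
    using that
  proof (induction k rule: dec_induct)
    case (step k)
    then show ?case using diffs[of k] by simp
  qed simp
  have "0 = (\<Sum>k\<in>{1..Suc t}. g k * (c k - d k))"
    using sums by (simp add: right_diff_distrib sum_subtractf)
  also have "\<dots> = (c 1 - d 1) * (\<Sum>k\<in>{1..Suc t}. g k)"
    unfolding sum_distrib_left
  proof (intro sum.cong refl)
    fix k assume "k \<in> {1..Suc t}"
    then show "g k * (c k - d k) = (c 1 - d 1) * g k" using offset[of k] by simp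
  qed
  finally have "c 1 = d 1" using total by simp
  then show ?thesis using offset[of k] k by simp
qed

lemma weighted_mean_square_defect:
  fixes a b x y :: real
  assumes "a + b \<noteq> 0"
  shows "a * x\<^sup>2 + b * y\<^sup>2 - (a + b) * ((a * x + b * y) / (a + b))\<^sup>2
    = a * b * (y - x)\<^sup>2 / (a + b)"
proof -
  define m where "m = (a * x + b * y) / (a + b)"
  have mean: "(a + b) * m = a * x + b * y"
    using assms unfolding m_def by simp
  have "(a * x\<^sup>2 + b * y\<^sup>2 - (a + b) * m\<^sup>2) * (a + b)
      = (a + b) * (a * x\<^sup>2 + b * y\<^sup>2) - ((a + b) * m)\<^sup>2"
    by (simp add: power2_eq_square algebra_simps)
  also have "\<dots> = (a + b) * (a * x\<^sup>2 + b * y\<^sup>2) - (a * x + b * y)\<^sup>2"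
    by (simp only: mean)
  also have "\<dots> = a * b * (y - x)\<^sup>2"
    by (simp add: power2_eq_square algebra_simps)
  finally have "(a * x\<^sup>2 + b * y\<^sup>2 - (a + b) * m\<^sup>2) * (a + b) = a * b * (y - x)\<^sup>2" .
  then show ?thesis
    using assms unfolding m_def[symmetric] by (simp add: eq_divide_eq)
qed

lemma weighted_mean_cross_term:
  fixes a b x y u w :: real
  assumes "a + b \<noteq> 0"
  shows "(a * x + b * y) / (a + b) * (u + w) - (x * u + y * w)
    = (y - x) * (b * u - a * w) / (a + b)"
proof -
  have "(a * x + b * y) * (u + w) - (a + b) * (x * u + y * w) = (y - x) * (b * u - a * w)"
    by (simp add: algebra_simps)
  then show ?thesis
    using assms by (simp add: field_simps)
qed

lemma quotient_lt_merge_adjacent: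
  fixes g c \<rho> :: "nat \<Rightarrow> real"
  assumes i: "1 \<le> i" "i \<le> t"
    and g_pos: "\<And>k. k \<in> {1..Suc t} \<Longrightarrow> g k > 0"
    and c_lt: "c i < c (Suc i)"
    and slopes: "\<rho> (Suc i) * g i \<le> \<rho> i * g (Suc i)"
    and num_pos: "(\<Sum>k\<in>{1..Suc t}. c k * \<rho> k) > 0"
  defines "m \<equiv> (g i * c i + g (Suc i) * c (Suc i)) / (g i + g (Suc i))"
  shows "(\<Sum>k\<in>{1..Suc t}. c k * \<rho> k) / sqrt (\<Sum>k\<in>{1..Suc t}. g k * (c k)\<^sup>2)
       < (\<Sum>k\<in>{1..t}. merge_at i c m k * merge_at i \<rho> (\<rho> i + \<rho> (Suc i)) k)
         / sqrt (\<Sum>k\<in>{1..t}. merge_at i g (g i + g (Suc i)) k * (merge_at i c m k)\<^sup>2)"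
proof -
  define N where "N = (\<Sum>k\<in>{1..Suc t}. c k * \<rho> k)"
  define Q where "Q = (\<Sum>k\<in>{1..Suc t}. g k * (c k)\<^sup>2)"
  define N' where "N' = (\<Sum>k\<in>{1..t}. merge_at i c m k * merge_at i \<rho> (\<rho> i + \<rho> (Suc i)) k)"
  define Q' where "Q' = (\<Sum>k\<in>{1..t}. merge_at i g (g i + g (Suc i)) k * (merge_at i c m k)\<^sup>2)"
  have gi: "g i > 0" "g (Suc i) > 0"
    using g_pos i by auto
  have "N' - N = m * (\<rho> i + \<rho> (Suc i)) - (c i * \<rho> i + c (Suc i) * \<rho> (Suc i))"
    unfolding N'_def N_def merge_at_map2[of "(*)"] sum_merge_at[OF i] by simp
  also have "\<dots> = (c (Suc i) - c i) * (g (Suc i) * \<rho> i - g i * \<rho> (Suc i)) / (g i + g (Suc i))"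
    unfolding m_def using gi by (intro weighted_mean_cross_term) simp
  also have "\<dots> \<ge> 0"
    using c_lt slopes gi by (intro divide_nonneg_pos mult_nonneg_nonneg) (simp_all add: mult.commute)
  finally have N_le: "N \<le> N'" by simp
  have "Q - Q' = g i * (c i)\<^sup>2 + g (Suc i) * (c (Suc i))\<^sup>2 - (g i + g (Suc i)) * m\<^sup>2"
    unfolding Q'_def Q_def merge_at_map2[of "\<lambda>a b. a * b\<^sup>2"] sum_merge_at[OF i] by simp
  also have "\<dots> = g i * g (Suc i) * (c (Suc i) - c i)\<^sup>2 / (g i + g (Suc i))"
    unfolding m_def using gi by (intro weighted_mean_square_defect) simp
  also have "\<dots> > 0"
    using gi c_lt by simp
  finally have Q_gt: "Q' < Q" by simp
  have merged_g_pos: "merge_at i g (g i + g (Suc i)) k > 0" if "k \<in> {1..t}" for k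
    using that g_pos gi by (auto simp: merge_at_def)
  have "Q' > 0"
  proof (rule ccontr)
    assume "\<not> Q' > 0"
    moreover have "Q' \<ge> 0"
      unfolding Q'_def using merged_g_pos by (intro sum_nonneg) (simp add: less_imp_le)
    ultimately have terms_zero:
      "\<forall>k\<in>{1..t}. merge_at i g (g i + g (Suc i)) k * (merge_at i c m k)\<^sup>2 = 0"
      unfolding Q'_def using merged_g_pos
      by (subst sum_nonneg_eq_0_iff[symmetric]) (auto simp: less_imp_le)
    have "N' = 0"
      unfolding N'_def
    proof (intro sum.neutral ballI)
      fix k assume k: "k \<in> {1..t}"
      then have "merge_at i c m k = 0"
        using bspec[OF terms_zero k] merged_g_pos[OF k] by simp
      then show "merge_at i c m k * merge_at i \<rho> (\<rho> i + \<rho> (Suc i)) k = 0" by simp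
    qed
    then show False
      using N_le num_pos unfolding N_def by simp
  qed
  then have "N / sqrt Q < N / sqrt Q'"
    using num_pos Q_gt unfolding N_def by (intro divide_strict_left_mono) auto
  also have "\<dots> \<le> N' / sqrt Q'"
    using N_le \<open>Q' > 0\<close> by (intro divide_right_mono) auto
  finally show ?thesis
    unfolding N_def Q_def N'_def Q'_def .
qed

lemma cdim_filtration_bot: "is_filtration t Vf \<Longrightarrow> cdim (Vf 0) = 0"
  unfolding is_filtration_def cdim_def by simp

lemma cdim_filtration_top:
  "is_filtration t (Vf :: nat \<Rightarrow> 'k::finite cvec set) \<Longrightarrow> cdim (Vf (Suc t)) = CARD('k)"
  using vec_dim_card unfolding is_filtration_def cdim_def by simp

lemma cdim_filtration_less:
  assumes "is_filtration t Vf" "j \<le> t"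
  shows "cdim (Vf j) < cdim (Vf (Suc j))"
proof -
  have "vec.subspace (Vf j)" "vec.subspace (Vf (Suc j))" "Vf j \<subset> Vf (Suc j)"
    using assms unfolding is_filtration_def by auto
  then show ?thesis
    unfolding cdim_def by (metis vec.dim_psubset vec.span_eq_iff)
qed

lemma gdim_eq_diff:
  assumes "is_filtration t Vf" "k \<le> Suc t"
  shows "real (gdim Vf k) = real (cdim (Vf k)) - real (cdim (Vf (k - 1)))"
proof (cases k)
  case (Suc j)
  then show ?thesis
    using cdim_filtration_less[OF assms(1), of j] assms(2) by (simp add: gdim_def of_nat_diff)
qed (simp add: gdim_def)

lemma gdim_pos:
  assumes "is_filtration t Vf" "k \<in> {1..Suc t}"
  shows "gdim Vf k > 0"
proof -
  obtain j where "k = Suc j" "j \<le> t"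
    using assms(2) by (cases k) auto
  then show ?thesis
    using cdim_filtration_less[OF assms(1)] by (simp add: gdim_def)
qed

lemma sum_gdim:
  assumes "is_filtration t (Vf :: nat \<Rightarrow> 'k::finite cvec set)"
  shows "(\<Sum>k\<in>{1..Suc t}. real (gdim Vf k)) = real CARD('k)"
proof -
  have "(\<Sum>k\<in>{1..Suc t}. real (gdim Vf k))
      = (\<Sum>k\<in>{Suc 0..Suc t}. real (cdim (Vf k)) - real (cdim (Vf (k - 1))))"
    using gdim_eq_diff[OF assms] by (intro sum.cong) auto
  also have "\<dots> = real (cdim (Vf (Suc t))) - real (cdim (Vf 0))"
    by (rule sum_telescope'') simp
  finally show ?thesis
    using cdim_filtration_bot[OF assms] cdim_filtration_top[OF assms] by simp
qed

lemma is_filtration_drop_step: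
  assumes F: "is_filtration (Suc t) Vf" and i: "1 \<le> i" "i \<le> Suc t"
  shows "is_filtration t (drop_step i Vf)"
  unfolding is_filtration_def
proof (intro conjI allI impI)
  have Vf: "Vf 0 = {0}" "Vf (Suc (Suc t)) = UNIV"
    "\<And>j. j \<le> Suc (Suc t) \<Longrightarrow> vec.subspace (Vf j)"
    "\<And>j. j \<le> Suc t \<Longrightarrow> Vf j \<subset> Vf (Suc j)"
    using F unfolding is_filtration_def by auto
  show "drop_step i Vf 0 = {0}" "drop_step i Vf (Suc t) = UNIV"
    using Vf i by (auto simp: drop_step_def)
  show "vec.subspace (drop_step i Vf j)" if "j \<le> Suc t" for j
    using Vf(3) that by (simp add: drop_step_def)
  show "drop_step i Vf j \<subset> drop_step i Vf (Suc j)" if "j \<le> t" for j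
  proof -
    consider "Suc j < i" | "Suc j = i" | "i \<le> j" by linarith
    then show ?thesis
    proof cases
      case 2
      then have "Vf j \<subset> Vf (Suc (Suc j))"
        using Vf(4)[of j] Vf(4)[of "Suc j"] that by auto
      then show ?thesis using 2 by (simp add: drop_step_def)
    qed (use Vf(4) that in \<open>auto simp: drop_step_def\<close>)
  qed
qed

lemma gdim_drop_step:
  assumes F: "is_filtration (Suc t) Vf" and i: "1 \<le> i" "i \<le> Suc t" and k: "k \<le> Suc t"
  shows "real (gdim (drop_step i Vf) k)
    = merge_at i (\<lambda>k. real (gdim Vf k)) (real (gdim Vf i) + real (gdim Vf (Suc i))) k"
proof -
  define D where "D k = real (cdim (Vf k))" for k
  have "real (gdim (drop_step i Vf) k) = drop_step i D k - drop_step i D (k - 1)"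
    using gdim_eq_diff[OF is_filtration_drop_step[OF F i] k] by (simp add: D_def drop_step_def)
  also have "\<dots> = merge_at i (\<lambda>k. D k - D (k - 1)) ((D i - D (i - 1)) + (D (Suc i) - D i)) k"
    by (rule diff_drop_step[OF i(1)])
  also have "\<dots> = merge_at i (\<lambda>k. real (gdim Vf k)) (real (gdim Vf i) + real (gdim Vf (Suc i))) k"
    using gdim_eq_diff[OF F] i k by (simp add: D_def merge_at_def)
  finally show ?thesis .
qed

lemma Gam_Suc_diff:
  assumes "1 \<le> j"
  shows "Gam t (Vf :: nat \<Rightarrow> 'k::finite cvec set) nw (Suc j) - Gam t Vf nw j
    = real CARD('k) * real_of_rat (nw j)"
proof -
  have "{1..<Suc j} = insert j {1..<j}"
    using assms by auto
  then show ?thesis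
    unfolding Gam_def Let_def by (simp add: algebra_simps)
qed

lemma sum_gdim_mult_Gam:
  assumes "is_filtration t (Vf :: nat \<Rightarrow> 'k::finite cvec set)"
  shows "(\<Sum>k\<in>{1..Suc t}. real (gdim Vf k) * Gam t Vf nw k) = 0"
proof -
  define p where "p = real CARD('k)"
  define S where "S j = p * (\<Sum>l\<in>{1..<j}. real_of_rat (nw l))" for j
  define C where "C = (\<Sum>k\<in>{1..Suc t}. real (gdim Vf k) * S k) / p"
  have "Gam t Vf nw = (\<lambda>k. S k - C)"
    unfolding Gam_def Let_def S_def C_def p_def by simp
  then have "(\<Sum>k\<in>{1..Suc t}. real (gdim Vf k) * Gam t Vf nw k)
      = (\<Sum>k\<in>{1..Suc t}. real (gdim Vf k) * S k) - C * (\<Sum>k\<in>{1..Suc t}. real (gdim Vf k))"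
    by (simp add: algebra_simps sum_subtractf sum_distrib_left)
  also have "\<dots> = 0"
    using sum_gdim[OF assms] unfolding C_def p_def by simp
  finally show ?thesis .
qed

lemma Gam_eqI:
  fixes c :: "nat \<Rightarrow> real"
  assumes F: "is_filtration t (Vf :: nat \<Rightarrow> 'k::finite cvec set)"
    and diffs: "\<And>j. j \<in> {1..t} \<Longrightarrow> c (Suc j) - c j = real CARD('k) * real_of_rat (nw j)"
    and balanced: "(\<Sum>k\<in>{1..Suc t}. real (gdim Vf k) * c k) = 0"
    and k: "k \<in> {1..Suc t}"
  shows "Gam t Vf nw k = c k"
proof (rule eq_if_diffs_eq_weighted_sums_eq[where g = "\<lambda>k. real (gdim Vf k)"])
  show "Gam t Vf nw (Suc j) - Gam t Vf nw j = c (Suc j) - c j" if "j \<in> {1..t}" for j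
    using that Gam_Suc_diff[of j] diffs[OF that] by simp
  show "(\<Sum>k\<in>{1..Suc t}. real (gdim Vf k) * Gam t Vf nw k)
      = (\<Sum>k\<in>{1..Suc t}. real (gdim Vf k) * c k)"
    using sum_gdim_mult_Gam[OF F] balanced by simp
  show "(\<Sum>k\<in>{1..Suc t}. real (gdim Vf k)) \<noteq> 0"
    using sum_gdim[OF F] by simp
qed (rule k)

text \<open>The weight n_i is split between n_(i-1) and n_(i+1) so that the Gamma of the coarser
  filtration is the old one with Gamma_i, Gamma_(i+1) replaced by their weighted mean
  (see Gam_drop_step).\<close>
definition merge_weights ::
    "nat \<Rightarrow> (nat \<Rightarrow> 'k::finite cvec set) \<Rightarrow> (nat \<Rightarrow> rat) \<Rightarrow> nat \<Rightarrow> rat" where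
  "merge_weights i Vf nw j =
     (let a = of_nat (gdim Vf i); b = of_nat (gdim Vf (Suc i))
      in if j < i - 1 then nw j
         else if j = i - 1 then nw j + b * nw i / (a + b)
         else if j = i then nw (Suc i) + a * nw i / (a + b)
         else nw (Suc j))"

lemma is_weighted_filtration_drop_step:
  assumes wf: "is_weighted_filtration (Suc t) Vf nw" and i: "1 \<le> i" "i \<le> Suc t"
  shows "is_weighted_filtration t (drop_step i Vf) (merge_weights i Vf nw)"
  unfolding is_weighted_filtration_def
proof (intro conjI ballI)
  have F: "is_filtration (Suc t) Vf" and nw_pos: "\<And>j. j \<in> {1..Suc t} \<Longrightarrow> nw j > 0"
    using wf unfolding is_weighted_filtration_def by auto
  show "is_filtration t (drop_step i Vf)"
    using F i by (rule is_filtration_drop_step)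
  have share_nonneg: "0 \<le> of_nat a * nw i / (of_nat (gdim Vf i) + of_nat (gdim Vf (Suc i)))" for a
    using nw_pos[of i] i by simp
  fix j assume j: "j \<in> {1..t}"
  consider "j < i - 1" | "j = i - 1" | "j = i" | "i < j" by linarith
  then show "0 < merge_weights i Vf nw j"
  proof cases
    case 2
    then show ?thesis
      using nw_pos[of j] share_nonneg[of "gdim Vf (Suc i)"] j by (simp add: merge_weights_def Let_def)
  next
    case 3
    moreover have "\<not> i < i - 1" "i \<noteq> i - 1"
      using i by auto
    ultimately show ?thesis
      using nw_pos[of "Suc i"] share_nonneg[of "gdim Vf i"] j by (simp add: merge_weights_def Let_def)
  qed (use nw_pos j in \<open>auto simp: merge_weights_def Let_def\<close>)
qed

lemma Gam_drop_step:
  fixes Vf :: "nat \<Rightarrow> 'k::finite cvec set"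
  assumes wf: "is_weighted_filtration (Suc t) Vf nw" and i: "1 \<le> i" "i \<le> Suc t"
    and k: "k \<in> {1..Suc t}"
  defines "g \<equiv> \<lambda>k. real (gdim Vf k)" and "\<Gamma> \<equiv> Gam (Suc t) Vf nw"
  shows "Gam t (drop_step i Vf) (merge_weights i Vf nw) k
    = merge_at i \<Gamma> ((g i * \<Gamma> i + g (Suc i) * \<Gamma> (Suc i)) / (g i + g (Suc i))) k"
proof -
  define p where "p = real CARD('k)"
  define m where "m = (g i * \<Gamma> i + g (Suc i) * \<Gamma> (Suc i)) / (g i + g (Suc i))"
  have F: "is_filtration (Suc t) Vf"
    using wf unfolding is_weighted_filtration_def by simp
  have gi: "g i > 0" "g (Suc i) > 0"
    unfolding g_def using gdim_pos[OF F] i by auto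
  have \<Gamma>_diff: "\<Gamma> (Suc j) - \<Gamma> j = p * real_of_rat (nw j)" if "1 \<le> j" for j
    unfolding \<Gamma>_def p_def using that by (rule Gam_Suc_diff)
  have m_left: "m - \<Gamma> i = g (Suc i) / (g i + g (Suc i)) * (p * real_of_rat (nw i))"
    and m_right: "\<Gamma> (Suc i) - m = g i / (g i + g (Suc i)) * (p * real_of_rat (nw i))"
    unfolding m_def \<Gamma>_diff[OF i(1), symmetric] using gi by (simp_all add: field_simps)
  have weight_share: "real_of_rat (of_nat a * nw i / (of_nat (gdim Vf i) + of_nat (gdim Vf (Suc i))))
      = real a / (g i + g (Suc i)) * real_of_rat (nw i)" for a
    unfolding g_def by (simp add: of_rat_mult of_rat_divide of_rat_add)
  have "\<not> i < i - 1" "i \<noteq> i - 1"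
    using i by auto
  show ?thesis
    unfolding m_def[symmetric]
  proof (rule Gam_eqI[OF is_filtration_drop_step[OF F i] _ _ k])
    fix j assume j: "j \<in> {1..t}"
    consider "Suc j < i" | "Suc j = i" | "j = i" | "i < j" by linarith
    then show "merge_at i \<Gamma> m (Suc j) - merge_at i \<Gamma> m j
      = real CARD('k) * real_of_rat (merge_weights i Vf nw j)"
    proof cases
      case 1
      then have "j < i - 1" by simp
      with 1 show ?thesis
        using \<Gamma>_diff[of j] j by (simp add: merge_at_def merge_weights_def Let_def p_def)
    next
      case 2
      then have "merge_at i \<Gamma> m (Suc j) - merge_at i \<Gamma> m j
          = (m - \<Gamma> i) + (\<Gamma> (Suc j) - \<Gamma> j)"
        by (simp add: merge_at_def)
      also have "\<dots> = p * real_of_rat (merge_weights i Vf nw j)"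
        using 2[symmetric] j m_left \<Gamma>_diff[of j] weight_share[of "gdim Vf (Suc i)"]
        by (simp add: merge_weights_def Let_def of_rat_add g_def algebra_simps)
      finally show ?thesis unfolding p_def .
    next
      case 3
      then have "merge_at i \<Gamma> m (Suc j) - merge_at i \<Gamma> m j
          = (\<Gamma> (Suc i) - m) + (\<Gamma> (Suc (Suc i)) - \<Gamma> (Suc i))"
        by (simp add: merge_at_def)
      also have "\<dots> = p * real_of_rat (merge_weights i Vf nw j)"
        using 3 i m_right \<open>\<not> i < i - 1\<close> \<open>i \<noteq> i - 1\<close>
          \<Gamma>_diff[of "Suc i"] weight_share[of "gdim Vf i"]
        by (simp add: merge_weights_def Let_def of_rat_add g_def algebra_simps)
      finally show ?thesis unfolding p_def .
    next
      case 4
      then have "\<not> j < i - 1" "j \<noteq> i - 1" by auto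
      with 4 show ?thesis
        using \<Gamma>_diff[of "Suc j"] by (simp add: merge_at_def merge_weights_def Let_def p_def)
    qed
  next
    have "(\<Sum>k\<in>{1..Suc t}. real (gdim (drop_step i Vf) k) * merge_at i \<Gamma> m k)
        = (\<Sum>k\<in>{1..Suc t}. merge_at i (\<lambda>k. g k * \<Gamma> k) ((g i + g (Suc i)) * m) k)"
      using gdim_drop_step[OF F i] unfolding g_def
      by (intro sum.cong) (auto simp: merge_at_map2[of "(*)"])
    also have "\<dots> = (\<Sum>k\<in>{1..Suc (Suc t)}. g k * \<Gamma> k) - g i * \<Gamma> i - g (Suc i) * \<Gamma> (Suc i)
        + (g i + g (Suc i)) * m"
      using i by (intro sum_merge_at) auto
    also have "\<dots> = 0"
      using sum_gdim_mult_Gam[OF F] gi unfolding g_def \<Gamma>_def m_def by simp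
    finally show "(\<Sum>k\<in>{1..Suc t}. real (gdim (drop_step i Vf) k) * merge_at i \<Gamma> m k) = 0" .
  qed
qed

lemma kempf_mu_eq:
  assumes F: "is_filtration t (Vf :: nat \<Rightarrow> 'k::finite cvec set)"
    and rk_zero: "rk {0} = 0" and rk_top: "rk UNIV = r"
  shows "kempf_mu r rk t Vf nw =
    (\<Sum>k\<in>{1..Suc t}. Gam t Vf nw k * (real (rk (Vf k)) - real (rk (Vf (k - 1)))))
    / sqrt (\<Sum>k\<in>{1..Suc t}. real (gdim Vf k) * (Gam t Vf nw k)\<^sup>2)"
proof -
  define p where "p = real CARD('k)"
  define \<Gamma> where "\<Gamma> = Gam t Vf nw"
  define a where "a j = real r * real (cdim (Vf j)) - real (rk (Vf j)) * p" for j
  have p: "p > 0"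
    unfolding p_def by simp
  have Vf: "Vf 0 = {0}" "Vf (Suc t) = UNIV"
    using F unfolding is_filtration_def by auto
  have a_ends: "a 0 = 0" "a (Suc t) = 0"
    unfolding a_def p_def
    using Vf rk_zero rk_top cdim_filtration_bot[OF F] cdim_filtration_top[OF F] by simp_all
  have "(\<Sum>j\<in>{1..t}. real_of_rat (nw j) * a j)
      = (\<Sum>j\<in>{1..t}. (\<Gamma> (Suc j) - \<Gamma> j) * a j) / p"
    unfolding sum_divide_distrib \<Gamma>_def p_def
    by (intro sum.cong refl) (simp add: Gam_Suc_diff)
  also have "(\<Sum>j\<in>{1..t}. (\<Gamma> (Suc j) - \<Gamma> j) * a j)
      = (\<Sum>k\<in>{1..Suc t}. \<Gamma> k * (a (k - 1) - a k))"
    using sum_diff_mult_by_parts[of \<Gamma> a t] a_ends by simp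
  also have "\<dots> = (\<Sum>k\<in>{1..Suc t}. p * (\<Gamma> k * (real (rk (Vf k)) - real (rk (Vf (k - 1)))))
                     - real r * (real (gdim Vf k) * \<Gamma> k))"
  proof (intro sum.cong refl)
    fix k assume "k \<in> {1..Suc t}"
    then have g_eq: "real (gdim Vf k) = real (cdim (Vf k)) - real (cdim (Vf (k - 1)))"
      by (intro gdim_eq_diff[OF F]) simp
    show "\<Gamma> k * (a (k - 1) - a k) = p * (\<Gamma> k * (real (rk (Vf k)) - real (rk (Vf (k - 1)))))
        - real r * (real (gdim Vf k) * \<Gamma> k)"
      unfolding g_eq a_def by (simp add: algebra_simps)
  qed
  also have "\<dots> = p * (\<Sum>k\<in>{1..Suc t}. \<Gamma> k * (real (rk (Vf k)) - real (rk (Vf (k - 1)))))"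
    using sum_gdim_mult_Gam[OF F] unfolding \<Gamma>_def
    by (simp add: sum_subtractf sum_distrib_left[symmetric])
  finally have "(\<Sum>j\<in>{1..t}. real_of_rat (nw j) * a j)
      = (\<Sum>k\<in>{1..Suc t}. \<Gamma> k * (real (rk (Vf k)) - real (rk (Vf (k - 1)))))"
    using p by simp
  then show ?thesis
    unfolding kempf_mu_def \<Gamma>_def a_def p_def by simp
qed

lemma kempf_mu_lt_drop_step:
  fixes Vf :: "nat \<Rightarrow> 'k::finite cvec set"
  assumes wf: "is_weighted_filtration (Suc t) Vf nw"
    and rk_zero: "rk {0} = 0" and rk_top: "rk UNIV = r"
    and i: "1 \<le> i" "i \<le> Suc t"
    and slopes: "(real (rk (Vf (Suc i))) - real (rk (Vf i))) * real (gdim Vf i)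
      \<le> (real (rk (Vf i)) - real (rk (Vf (i - 1)))) * real (gdim Vf (Suc i))"
    and mu_pos: "kempf_mu r rk (Suc t) Vf nw > 0"
  shows "kempf_mu r rk (Suc t) Vf nw < kempf_mu r rk t (drop_step i Vf) (merge_weights i Vf nw)"
proof -
  define g where "g k = real (gdim Vf k)" for k
  define \<Gamma> where "\<Gamma> = Gam (Suc t) Vf nw"
  define R where "R k = real (rk (Vf k))" for k
  define \<rho> where "\<rho> = (\<lambda>k. R k - R (k - 1))"
  define m where "m = (g i * \<Gamma> i + g (Suc i) * \<Gamma> (Suc i)) / (g i + g (Suc i))"
  have F: "is_filtration (Suc t) Vf" and nw_pos: "nw i > 0"
    using wf i unfolding is_weighted_filtration_def by auto
  have kempf_mu: "kempf_mu r rk (Suc t) Vf nw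
      = (\<Sum>k\<in>{1..Suc (Suc t)}. \<Gamma> k * \<rho> k)
        / sqrt (\<Sum>k\<in>{1..Suc (Suc t)}. g k * (\<Gamma> k)\<^sup>2)"
    unfolding \<Gamma>_def \<rho>_def R_def g_def by (rule kempf_mu_eq[OF F rk_zero rk_top])
  have "kempf_mu r rk t (drop_step i Vf) (merge_weights i Vf nw)
      = (\<Sum>k\<in>{1..Suc t}. merge_at i \<Gamma> m k * merge_at i \<rho> (\<rho> i + \<rho> (Suc i)) k)
        / sqrt (\<Sum>k\<in>{1..Suc t}. merge_at i g (g i + g (Suc i)) k * (merge_at i \<Gamma> m k)\<^sup>2)"
  proof -
    have "real (rk (drop_step i Vf k)) - real (rk (drop_step i Vf (k - 1)))
        = merge_at i \<rho> (\<rho> i + \<rho> (Suc i)) k" for k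
    proof -
      have "real (rk (drop_step i Vf k)) = drop_step i R k" for k
        by (simp add: drop_step_def R_def)
      then show ?thesis
        using diff_drop_step[OF i(1), of R k] by (simp add: \<rho>_def)
    qed
    then show ?thesis
      unfolding kempf_mu_eq[OF is_filtration_drop_step[OF F i] rk_zero rk_top]
      using Gam_drop_step[OF wf i] gdim_drop_step[OF F i]
      unfolding m_def g_def \<Gamma>_def
      by (intro arg_cong2[where f = "(/)"] arg_cong[where f = sqrt] sum.cong) auto
  qed
  moreover have "kempf_mu r rk (Suc t) Vf nw
      < (\<Sum>k\<in>{1..Suc t}. merge_at i \<Gamma> m k * merge_at i \<rho> (\<rho> i + \<rho> (Suc i)) k)
        / sqrt (\<Sum>k\<in>{1..Suc t}. merge_at i g (g i + g (Suc i)) k * (merge_at i \<Gamma> m k)\<^sup>2)"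
    unfolding kempf_mu m_def
  proof (rule quotient_lt_merge_adjacent[OF i])
    show g_pos: "g k > 0" if "k \<in> {1..Suc (Suc t)}" for k
      using gdim_pos[OF F that] unfolding g_def by simp
    have "real CARD('k) * real_of_rat (nw i) > 0"
      using nw_pos by simp
    then show "\<Gamma> i < \<Gamma> (Suc i)"
      using Gam_Suc_diff[OF i(1), of "Suc t" Vf nw] unfolding \<Gamma>_def by linarith
    show "\<rho> (Suc i) * g i \<le> \<rho> i * g (Suc i)"
      using slopes unfolding \<rho>_def R_def g_def by simp
    have "sqrt (\<Sum>k\<in>{1..Suc (Suc t)}. g k * (\<Gamma> k)\<^sup>2) \<ge> 0"
      using g_pos by (intro real_sqrt_ge_zero sum_nonneg) (simp add: less_imp_le)
    then show "(\<Sum>k\<in>{1..Suc (Suc t)}. \<Gamma> k * \<rho> k) > 0"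
      using mu_pos zero_less_divide_iff unfolding kempf_mu by (metis not_less)
  qed
  ultimately show ?thesis by simp
qed

lemma normalized_slope_less:
  fixes M p r u w a b :: real
  assumes "M > 0" "p > 0" "a > 0" "b > 0" "u * b < w * a"
  shows "M * (u * p - r * a) / (a * p) < M * (w * p - r * b) / (b * p)"
proof -
  have "u / a < w / b"
    using assms by (simp add: divide_less_eq less_divide_eq mult.commute)
  then have "M * (u / a - r / p) < M * (w / b - r / p)"
    using assms(1) by simp
  then show ?thesis
    using assms(2-4) by (simp add: diff_divide_distrib right_diff_distrib)
qed

theorem lemma3p4:
  fixes r m n t :: nat
    and rk :: "'k::finite cvec set \<Rightarrow> nat"
    and Vf :: "nat \<Rightarrow> 'k cvec set"
  assumes "r \<ge> 1"
    and "m \<ge> 1"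
    and rk_zero: "rk {0} = 0"
    and rk_top: "rk UNIV = r"
    and rk_mono: "\<And>W W'. vec.subspace W \<Longrightarrow> vec.subspace W' \<Longrightarrow> W \<subseteq> W' \<Longrightarrow> rk W \<le> rk W'"
    and unstable: "\<exists>t' (Vf' :: nat \<Rightarrow> 'k cvec set) nw'.
                     is_weighted_filtration t' Vf' nw' \<and> kempf_mu r rk t' Vf' nw' > 0"
    and kempf: "is_kempf_filtration r rk t Vf"
  shows "\<forall>i\<in>{1..t}.
           (let v = (\<lambda>j. real m ^ (n + 1) *
                       ((real (rk (Vf j)) - real (rk (Vf (j - 1)))) * real CARD('k)
                          - real r * real (gdim Vf j))
                       / (real (gdim Vf j) * real CARD('k)))
            in v i < v (Suc i))"
proof
  \<comment> \<open>Only the values of rk at 0 and V enter.\<close>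
  obtain nw where wf: "is_weighted_filtration t Vf nw"
    and maximal: "\<And>t' (Vf' :: nat \<Rightarrow> 'k cvec set) nw'. is_weighted_filtration t' Vf' nw' \<Longrightarrow>
      kempf_mu r rk t' Vf' nw' \<le> kempf_mu r rk t Vf nw"
    using kempf unfolding is_kempf_filtration_def by blast
  have mu_pos: "kempf_mu r rk t Vf nw > 0"
    using unstable maximal by (meson less_le_trans)
  have F: "is_filtration t Vf"
    using wf unfolding is_weighted_filtration_def by simp
  fix i assume i: "i \<in> {1..t}"
  then obtain s where t: "t = Suc s" by (cases t) auto
  have "(real (rk (Vf i)) - real (rk (Vf (i - 1)))) * real (gdim Vf (Suc i))
      < (real (rk (Vf (Suc i))) - real (rk (Vf i))) * real (gdim Vf i)"
  proof (rule ccontr)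
    assume "\<not> ?thesis"
    then have "kempf_mu r rk t Vf nw < kempf_mu r rk s (drop_step i Vf) (merge_weights i Vf nw)"
      using kempf_mu_lt_drop_step[of s Vf nw rk r i] wf rk_zero rk_top i mu_pos t by simp
    moreover have "is_weighted_filtration s (drop_step i Vf) (merge_weights i Vf nw)"
      using is_weighted_filtration_drop_step[of s Vf nw i] wf i t by simp
    ultimately show False
      using maximal by fastforce
  qed
  then show "let v = (\<lambda>j. real m ^ (n + 1) *
                       ((real (rk (Vf j)) - real (rk (Vf (j - 1)))) * real CARD('k)
                          - real r * real (gdim Vf j))
                       / (real (gdim Vf j) * real CARD('k)))
            in v i < v (Suc i)"
    using gdim_pos[OF F, of i] gdim_pos[OF F, of "Suc i"] i \<open>m \<ge> 1\<close>
    by (auto simp: Let_def intro!: normalized_slope_less)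
qed

end
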